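(* Let $G$ be a finite graph with no frozen vertices. Then the Mycielskian $M(G)$ of $G$ has no frozen vertices.
   Context: For a graph $H$, a vertex $x$ is frozen if for every $\chi(H)$-colouring of $H$ all $\chi(H)$ colours appear on the closed neighbourhood of $x$ (so $x$ can never be recoloured); $\chi$ denotes the chromatic number. If $G$ has vertices $v_1,\dots,v_n$, its Mycielskian $M(G)$ is obtained by adding new vertices $u_1,\dots,u_n,w$, edges $wu_i$ for all $i$, and for each edge $v_iv_j\in E(G)$ the edges $u_iv_j$ and $v_iu_j$. It is known that $\chi(M(G))=\chi(G)+1$. *)

theory Defs
  imports Main
begin

definition simple_graph :: "'a set \<Rightarrow> ('a \<Rightarrow> 'a \<Rightarrow> bool) \<Rightarrow> bool" where
  "simple_graph V E \<longleftrightarrow> finite V \<and> (\<forall>x y. E x y \<longrightarrow> x \<in> V \<and> y \<in> V)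
     \<and> (\<forall>x y. E x y \<longrightarrow> E y x) \<and> (\<forall>x. \<not> E x x)"

definition colouring :: "'a set \<Rightarrow> ('a \<Rightarrow> 'a \<Rightarrow> bool) \<Rightarrow> nat \<Rightarrow> ('a \<Rightarrow> nat) \<Rightarrow> bool" where
  "colouring V E k c \<longleftrightarrow> (\<forall>x\<in>V. c x < k) \<and> (\<forall>x\<in>V. \<forall>y\<in>V. E x y \<longrightarrow> c x \<noteq> c y)"

definition chromatic_number :: "'a set \<Rightarrow> ('a \<Rightarrow> 'a \<Rightarrow> bool) \<Rightarrow> nat" where
  "chromatic_number V E = (LEAST k. \<exists>c. colouring V E k c)"

definition closed_nbhd :: "'a set \<Rightarrow> ('a \<Rightarrow> 'a \<Rightarrow> bool) \<Rightarrow> 'a \<Rightarrow> 'a set" where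
  "closed_nbhd V E x = insert x {y \<in> V. E x y}"

definition frozen :: "'a set \<Rightarrow> ('a \<Rightarrow> 'a \<Rightarrow> bool) \<Rightarrow> 'a \<Rightarrow> bool" where
  "frozen V E x \<longleftrightarrow> (\<forall>c. colouring V E (chromatic_number V E) c \<longrightarrow>
       {..<chromatic_number V E} \<subseteq> c ` closed_nbhd V E x)"

text \<open>Vertices of the Mycielskian: copies v_i, u_i of the old vertices and w.\<close>
datatype 'a myc_vertex = Vv 'a | Uu 'a | Ww

definition myc_verts :: "'a set \<Rightarrow> 'a myc_vertex set" where
  "myc_verts V = Vv ` V \<union> Uu ` V \<union> {Ww}"

fun myc_edge :: "'a set \<Rightarrow> ('a \<Rightarrow> 'a \<Rightarrow> bool) \<Rightarrow> 'a myc_vertex \<Rightarrow> 'a myc_vertex \<Rightarrow> bool" where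
  "myc_edge V E (Vv a) (Vv b) = E a b"
| "myc_edge V E (Uu a) (Vv b) = E a b"
| "myc_edge V E (Vv a) (Uu b) = E a b"
| "myc_edge V E Ww (Uu a) = (a \<in> V)"
| "myc_edge V E (Uu a) Ww = (a \<in> V)"
| "myc_edge V E _ _ = False"

end

(* A colouring f of M(G) with k colours gives a colouring of G with k - 1 colours: recolour every
   v_i that has the colour f(w) with f(u_i), which differs from f(w), and then move the colour
   k - 1 onto the now unused colour f(w).  Hence chi(M(G)) = chi(G) + 1.

   Let k = chi(G).  Extending a k-colouring c of G by u_i := c(v_i), w := k puts no colour below k
   on N[v_i] or N[u_i] that c does not already put on N[v_i] in G, so a colour that c misses there
   (it exists since v_i is not frozen in G) is also missed in M(G).  For w, colour every u_i with k
   and w with 0; then the colour 1 misses N[w], and 1 < k because a graph with a non-frozen vertex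
   needs at least two colours. *)
theory Submission
  imports Defs
begin

lemma chromatic_number_le: "colouring V E k c \<Longrightarrow> chromatic_number V E \<le> k"
  unfolding chromatic_number_def by (rule Least_le) blast

lemma colouring_chromatic_number:
  "colouring V E k c \<Longrightarrow> \<exists>c. colouring V E (chromatic_number V E) c"
  unfolding chromatic_number_def by (rule LeastI_ex) blast

lemma simple_graph_colouring_card:
  assumes "simple_graph V E"
  shows "\<exists>c. colouring V E (card V) c"
proof -
  have "finite V" using assms by (simp add: simple_graph_def)
  then obtain h where h: "bij_betw h V {0..<card V}" using ex_bij_betw_finite_nat by blast
  have "colouring V E (card V) h"
    unfolding colouring_def
  proof (intro conjI ballI impI)
    fix x assume "x \<in> V"
    then show "h x < card V" using h by (auto simp: bij_betw_def)
  next
    fix x y assume "x \<in> V" "y \<in> V" "E x y"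
    then show "h x \<noteq> h y"
      using assms h unfolding simple_graph_def bij_betw_def inj_on_def by metis
  qed
  then show ?thesis by blast
qed

lemma simple_graph_chromatic_colouring:
  "simple_graph V E \<Longrightarrow> \<exists>c. colouring V E (chromatic_number V E) c"
  using simple_graph_colouring_card colouring_chromatic_number by blast

lemma colouring_omit_colour:
  assumes "colouring V E k c" and "a < k" and "\<forall>x\<in>V. c x \<noteq> a"
  shows "\<exists>c'. colouring V E (k - 1) c'"
proof -
  have "colouring V E (k - 1) (\<lambda>x. if c x = k - 1 then a else c x)"
    unfolding colouring_def
  proof (intro conjI ballI impI)
    fix x assume "x \<in> V"
    then have "c x < k" "c x \<noteq> a" using assms(1,3) by (auto simp: colouring_def)
    then show "(if c x = k - 1 then a else c x) < k - 1" using assms(2) by auto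
  next
    fix x y assume "x \<in> V" "y \<in> V" "E x y"
    then have "c x \<noteq> c y" "c x \<noteq> a" "c y \<noteq> a" using assms(1,3) by (auto simp: colouring_def)
    then show "(if c x = k - 1 then a else c x) \<noteq> (if c y = k - 1 then a else c y)" by auto
  qed
  then show ?thesis by blast
qed

lemma not_frozen_iff:
  "\<not> frozen V E x \<longleftrightarrow> (\<exists>c j. colouring V E (chromatic_number V E) c
     \<and> j < chromatic_number V E \<and> j \<notin> c ` closed_nbhd V E x)"
  unfolding frozen_def by blast

lemma not_frozen_imp_chromatic_number_ge_2:
  assumes "x \<in> V" and "\<not> frozen V E x"
  shows "2 \<le> chromatic_number V E"
proof -
  obtain c j where c: "colouring V E (chromatic_number V E) c" and "j < chromatic_number V E"
    and j: "j \<notin> c ` closed_nbhd V E x"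
    using assms(2) unfolding not_frozen_iff by blast
  moreover have "c x < chromatic_number V E" using c assms(1) by (simp add: colouring_def)
  moreover have "c x \<noteq> j" using j by (auto simp: closed_nbhd_def)
  ultimately show ?thesis by linarith
qed

lemma colouring_myc_iff:
  assumes "simple_graph V E"
  shows "colouring (myc_verts V) (myc_edge V E) k f \<longleftrightarrow>
    f Ww < k \<and> (\<forall>a\<in>V. f (Vv a) < k \<and> f (Uu a) < k \<and> f (Uu a) \<noteq> f Ww) \<and>
    (\<forall>a\<in>V. \<forall>b\<in>V. E a b \<longrightarrow> f (Vv a) \<noteq> f (Vv b) \<and> f (Uu a) \<noteq> f (Vv b))"
    (is "?col \<longleftrightarrow> ?rhs")
proof
  assume ?col
  then show ?rhs unfolding colouring_def myc_verts_def by fastforce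
next
  assume rhs: ?rhs
  have vu: "f (Vv a) \<noteq> f (Uu b)" if "a \<in> V" "b \<in> V" "E a b" for a b
    using assms rhs that unfolding simple_graph_def by metis
  show ?col
    unfolding colouring_def
  proof (intro conjI ballI impI)
    fix x assume "x \<in> myc_verts V"
    then show "f x < k" using rhs by (auto simp: myc_verts_def)
  next
    fix x y assume "x \<in> myc_verts V" "y \<in> myc_verts V" "myc_edge V E x y"
    then show "f x \<noteq> f y"
      using rhs vu by (cases x; cases y) (auto simp: myc_verts_def)
  qed
qed

definition myc_lift :: "nat \<Rightarrow> ('a \<Rightarrow> nat) \<Rightarrow> 'a myc_vertex \<Rightarrow> nat" where
  "myc_lift k c x = (case x of Vv a \<Rightarrow> c a | Uu a \<Rightarrow> c a | Ww \<Rightarrow> k)"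

lemma colouring_myc_lift:
  assumes "simple_graph V E" and "colouring V E k c"
  shows "colouring (myc_verts V) (myc_edge V E) (Suc k) (myc_lift k c)"
  using assms(2) unfolding colouring_myc_iff[OF assms(1)] by (auto simp: colouring_def myc_lift_def)

lemma colouring_myc_Uu_new_colour:
  assumes "simple_graph V E" and "colouring V E k c" and "a < k"
  shows "colouring (myc_verts V) (myc_edge V E) (Suc k)
    (\<lambda>x. case x of Vv b \<Rightarrow> c b | Uu _ \<Rightarrow> k | Ww \<Rightarrow> a)"
  using assms(2,3) unfolding colouring_myc_iff[OF assms(1)] by (auto simp: colouring_def)

lemma colouring_myc_imp_colouring:
  assumes "simple_graph V E" and "colouring (myc_verts V) (myc_edge V E) k f"
  shows "\<exists>c. colouring V E (k - 1) c"
proof -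
  from assms(2) have w: "f Ww < k"
    and u: "\<And>a. a \<in> V \<Longrightarrow> f (Vv a) < k \<and> f (Uu a) < k \<and> f (Uu a) \<noteq> f Ww"
    and e: "\<And>a b. a \<in> V \<Longrightarrow> b \<in> V \<Longrightarrow> E a b \<Longrightarrow> f (Vv a) \<noteq> f (Vv b) \<and> f (Uu a) \<noteq> f (Vv b)"
    unfolding colouring_myc_iff[OF assms(1)] by blast+
  define c where "c b = (if f (Vv b) = f Ww then f (Uu b) else f (Vv b))" for b
  have "colouring V E k c"
    unfolding colouring_def
  proof (intro conjI ballI impI)
    fix a assume "a \<in> V"
    then show "c a < k" using u by (simp add: c_def)
  next
    fix a b assume ab: "a \<in> V" "b \<in> V" "E a b"
    moreover have "E b a" using assms(1) \<open>E a b\<close> by (simp add: simple_graph_def)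
    ultimately show "c a \<noteq> c b" using e[OF ab] e[of b a] unfolding c_def by auto
  qed
  moreover have "\<forall>b\<in>V. c b \<noteq> f Ww" using u by (simp add: c_def)
  ultimately show ?thesis using w by (intro colouring_omit_colour)
qed

lemma chromatic_number_myc:
  assumes "simple_graph V E"
  shows "chromatic_number (myc_verts V) (myc_edge V E) = Suc (chromatic_number V E)"
proof -
  obtain c where c: "colouring V E (chromatic_number V E) c"
    using simple_graph_chromatic_colouring[OF assms] by blast
  have upper: "chromatic_number (myc_verts V) (myc_edge V E) \<le> Suc (chromatic_number V E)"
    using colouring_myc_lift[OF assms c] chromatic_number_le by blast
  obtain f where f: "colouring (myc_verts V) (myc_edge V E)
      (chromatic_number (myc_verts V) (myc_edge V E)) f"
    using colouring_chromatic_number colouring_myc_lift[OF assms c] by blast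
  then have "f Ww < chromatic_number (myc_verts V) (myc_edge V E)"
    by (simp add: colouring_myc_iff[OF assms])
  moreover have "chromatic_number V E \<le> chromatic_number (myc_verts V) (myc_edge V E) - 1"
    using colouring_myc_imp_colouring[OF assms f] chromatic_number_le by blast
  ultimately show ?thesis using upper by linarith
qed

lemma closed_nbhd_myc_Vv:
  assumes "simple_graph V E"
  shows "closed_nbhd (myc_verts V) (myc_edge V E) (Vv i)
    = insert (Vv i) (Vv ` {j \<in> V. E i j} \<union> Uu ` {j \<in> V. E i j})"
    (is "?lhs = ?rhs")
proof (rule set_eqI)
  fix y
  show "y \<in> ?lhs \<longleftrightarrow> y \<in> ?rhs"
    using assms by (cases y) (auto simp: closed_nbhd_def myc_verts_def simple_graph_def)
qed

lemma closed_nbhd_myc_Uu: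
  assumes "simple_graph V E" and "i \<in> V"
  shows "closed_nbhd (myc_verts V) (myc_edge V E) (Uu i)
    = insert (Uu i) (insert Ww (Vv ` {j \<in> V. E i j}))"
    (is "?lhs = ?rhs")
proof (rule set_eqI)
  fix y
  show "y \<in> ?lhs \<longleftrightarrow> y \<in> ?rhs"
    using assms by (cases y) (auto simp: closed_nbhd_def myc_verts_def simple_graph_def)
qed

lemma closed_nbhd_myc_Ww:
  "closed_nbhd (myc_verts V) (myc_edge V E) Ww = insert Ww (Uu ` V)" (is "?lhs = ?rhs")
proof (rule set_eqI)
  fix y
  show "y \<in> ?lhs \<longleftrightarrow> y \<in> ?rhs"
    by (cases y) (auto simp: closed_nbhd_def myc_verts_def)
qed

lemma myc_lift_closed_nbhd_subset:
  assumes "simple_graph V E" and "i \<in> V" and "x \<in> {Vv i, Uu i}"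
  shows "myc_lift k c ` closed_nbhd (myc_verts V) (myc_edge V E) x
    \<subseteq> insert k (c ` closed_nbhd V E i)"
  using assms(3)
  by (auto simp: closed_nbhd_myc_Vv[OF assms(1)] closed_nbhd_myc_Uu[OF assms(1,2)] myc_lift_def
      closed_nbhd_def[of V E i])

lemma not_frozen_myc_copy:
  assumes "simple_graph V E" and "i \<in> V" and "\<not> frozen V E i" and "x \<in> {Vv i, Uu i}"
  shows "\<not> frozen (myc_verts V) (myc_edge V E) x"
proof -
  define k where "k = chromatic_number V E"
  obtain c j where c: "colouring V E k c" and "j < k" and j: "j \<notin> c ` closed_nbhd V E i"
    using assms(3) unfolding not_frozen_iff k_def by blast
  have "j \<notin> insert k (c ` closed_nbhd V E i)" using j \<open>j < k\<close> by simp
  then have "j \<notin> myc_lift k c ` closed_nbhd (myc_verts V) (myc_edge V E) x"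
    using myc_lift_closed_nbhd_subset[OF assms(1,2,4)] by blast
  moreover have "colouring (myc_verts V) (myc_edge V E) (Suc k) (myc_lift k c)"
    using colouring_myc_lift[OF assms(1) c] .
  moreover have "j < Suc k" using \<open>j < k\<close> by simp
  ultimately show ?thesis
    unfolding not_frozen_iff chromatic_number_myc[OF assms(1)] k_def[symmetric] by blast
qed

lemma not_frozen_myc_Ww:
  assumes "simple_graph V E" and "i \<in> V" and "\<not> frozen V E i"
  shows "\<not> frozen (myc_verts V) (myc_edge V E) Ww"
proof -
  define k where "k = chromatic_number V E"
  have "2 \<le> k" using not_frozen_imp_chromatic_number_ge_2[OF assms(2,3)] by (simp add: k_def)
  obtain c where c: "colouring V E k c"
    using simple_graph_chromatic_colouring[OF assms(1)] k_def by blast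
  define f where "f x = (case x of Vv b \<Rightarrow> c b | Uu _ \<Rightarrow> k | Ww \<Rightarrow> 0)" for x
  have "colouring (myc_verts V) (myc_edge V E) (Suc k) f"
    unfolding f_def using colouring_myc_Uu_new_colour[OF assms(1) c] \<open>2 \<le> k\<close> by simp
  moreover have "1 \<notin> f ` closed_nbhd (myc_verts V) (myc_edge V E) Ww"
    using \<open>2 \<le> k\<close> by (auto simp: closed_nbhd_myc_Ww f_def)
  moreover have "1 < Suc k" using \<open>2 \<le> k\<close> by simp
  ultimately show ?thesis
    unfolding not_frozen_iff chromatic_number_myc[OF assms(1)] k_def[symmetric] by blast
qed

theorem lemma2p5:
  fixes V :: "'a set" and E :: "'a \<Rightarrow> 'a \<Rightarrow> bool"
  assumes "simple_graph V E" and "V \<noteq> {}"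
    and "\<forall>x\<in>V. \<not> frozen V E x"
  shows "\<forall>x\<in>myc_verts V. \<not> frozen (myc_verts V) (myc_edge V E) x"
proof
  fix x assume "x \<in> myc_verts V"
  then consider (copy) i where "i \<in> V" "x \<in> {Vv i, Uu i}" | (apex) "x = Ww"
    unfolding myc_verts_def by blast
  then show "\<not> frozen (myc_verts V) (myc_edge V E) x"
  proof cases
    case copy
    then show ?thesis using not_frozen_myc_copy[OF assms(1)] assms(3) by blast
  next
    case apex
    obtain i where "i \<in> V" using assms(2) by blast
    then show ?thesis using not_frozen_myc_Ww[OF assms(1)] assms(3) apex by blast
  qed
qed

end
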